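(* Let $(X,\Sigma)$ be a random pair valued in $\mathcal{X}\times\mathfrak{S}_n$, where $\mathcal{X}\subset\mathbb{R}^d$ ($d\ge1$) is equipped with a norm $\|\cdot\|$ and $X\sim\mu$. Suppose that $P_x\in\mathcal{T}$ for all $x\in\mathcal{X}$, and that there exists $M<\infty$ such that $$\sum_{i<j}|p_{i,j}(x)-p_{i,j}(x')|\le M\|x-x'\|\quad\text{for all } x,x'\in\mathcal{X}.$$ Let $\mathcal{P}$ be a finite partition of $\mathcal{X}$ into measurable cells of positive $\mu$-measure, and let $\delta_{\mathcal{P}}=\max_{\mathcal{C}\in\mathcal{P}}\sup_{(x,x')\in\mathcal{C}^2}\|x-x'\|$. (1) For every $s_{\mathcal{P}}\in\mathcal{S}^*_{\mathcal{P}}$ we have $\mathcal{R}(s_{\mathcal{P}})-\mathcal{R}^*\le M\cdot\delta_{\mathcal{P}}$. Hence, if $(\mathcal{P}_m)_{m\ge1}$ is a sequence of such partitions with $\delta_{\mathcal{P}_m}\to0$, then $\mathcal{R}(s_{\mathcal{P}_m})\to\mathcal{R}^*$ as $m\to\infty$ for any choice $s_{\mathcal{P}_m}\in\mathcal{S}^*_{\mathcal{P}_m}$. (2) Suppose in addition that $H=\inf_{x\in\mathcal{X}}\min_{i<j}|p_{i,j}(x)-1/2|>0$ and that $P_{\mathcal{C}}\in\mathcal{T}$ for all $\mathcal{C}\in\mathcal{P}$. Let $s^*_{\mathcal{P}}(x)=\sum_{\mathcal{C}\in\mathcal{P}}\sigma^*_{P_{\mathcal{C}}}\mathbb{I}\{x\in\mathcal{C}\}$.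 Then $$\mathbb{E}\big[d_\tau(\sigma^*_{P_X},s^*_{\mathcal{P}}(X))\big]\le\sup_{x\in\mathcal{X}}d_\tau(\sigma^*_{P_x},s^*_{\mathcal{P}}(x))\le (M/H)\cdot\delta_{\mathcal{P}}.$$
   Context: $\mathfrak{S}_n$ is the set of permutations of $\{1,\dots,n\}$. The Kendall $\tau$ distance is $d_\tau(\sigma,\sigma')=\sum_{i<j}\mathbb{I}\{(\sigma(i)-\sigma(j))(\sigma'(i)-\sigma'(j))<0\}$. Conditional objects: $P_x$ is the conditional distribution of $\Sigma$ given $X=x$, and $p_{i,j}(x)=\mathbb{P}\{\Sigma(i)<\Sigma(j)\mid X=x\}$. For a measurable $\mathcal{C}$ with $\mu(\mathcal{C})>0$, $P_{\mathcal{C}}$ is the conditional distribution of $\Sigma$ given $X\in\mathcal{C}$. $\mathcal{T}$ is the set of strictly stochastically transitive distributions on $\mathfrak{S}_n$. These are the $P$ with pairwise probabilities $p_{i,j}=\mathbb{P}_{\Sigma\sim P}\{\Sigma(i)<\Sigma(j)\}$ such that (a) $p_{i,j}\ge1/2$ and $p_{j,k}\ge1/2$ imply $p_{i,k}\ge1/2$, and (b) $p_{i,j}\ne1/2$ for all $i<j$. For $P\in\mathcal{T}$ the unique minimizer of $\sigma\mapsto\mathbb{E}_{\Sigma\sim P}[d_\tau(\Sigma,\sigma)]$ (Kemeny median) is denoted $\sigma^*_P$. The risk of a measurable rule $s:\mathcal{X}\to\mathfrak{S}_n$ is $\mathcal{R}(s)=\mathbb{E}[d_\tau(s(X),\Sigma)]$,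 and $\mathcal{R}^*$ is the infimum over all such rules. $\mathcal{S}_{\mathcal{P}}$ is the set of rules constant on each cell of $\mathcal{P}$. $\mathcal{S}^*_{\mathcal{P}}$ is the set of minimizers of $\mathcal{R}$ over $\mathcal{S}_{\mathcal{P}}$; equivalently, the rules whose value on each cell $\mathcal{C}$ is a Kemeny median of $P_{\mathcal{C}}$. *)

theory Defs
  imports "HOL-Probability.Probability" "HOL-Combinatorics.Permutations"
begin

definition perms :: "nat \<Rightarrow> (nat \<Rightarrow> nat) set" where
  "perms n = {\<sigma>. \<sigma> permutes {1..n}}"

definition kendall :: "nat \<Rightarrow> (nat \<Rightarrow> nat) \<Rightarrow> (nat \<Rightarrow> nat) \<Rightarrow> real" where
  "kendall n \<sigma> \<sigma>' = (\<Sum>i\<in>{1..n}. \<Sum>j\<in>{i<..n}.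
     if (int (\<sigma> i) - int (\<sigma> j)) * (int (\<sigma>' i) - int (\<sigma>' j)) < 0 then 1 else 0)"

definition is_dist :: "nat \<Rightarrow> ((nat \<Rightarrow> nat) \<Rightarrow> real) \<Rightarrow> bool" where
  "is_dist n Q \<longleftrightarrow> (\<forall>\<sigma>\<in>perms n. 0 \<le> Q \<sigma>) \<and> (\<Sum>\<sigma>\<in>perms n. Q \<sigma>) = 1"

definition pprob :: "nat \<Rightarrow> ((nat \<Rightarrow> nat) \<Rightarrow> real) \<Rightarrow> nat \<Rightarrow> nat \<Rightarrow> real" where
  "pprob n Q i j = (\<Sum>\<sigma>\<in>{\<sigma>\<in>perms n. \<sigma> i < \<sigma> j}. Q \<sigma>)"

definition SST :: "nat \<Rightarrow> ((nat \<Rightarrow> nat) \<Rightarrow> real) \<Rightarrow> bool" where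
  "SST n Q \<longleftrightarrow> is_dist n Q
     \<and> (\<forall>i\<in>{1..n}. \<forall>j\<in>{1..n}. \<forall>k\<in>{1..n}.
          pprob n Q i j \<ge> 1/2 \<and> pprob n Q j k \<ge> 1/2 \<longrightarrow> pprob n Q i k \<ge> 1/2)
     \<and> (\<forall>i\<in>{1..n}. \<forall>j\<in>{1..n}. i < j \<longrightarrow> pprob n Q i j \<noteq> 1/2)"

definition exp_dist :: "nat \<Rightarrow> ((nat \<Rightarrow> nat) \<Rightarrow> real) \<Rightarrow> (nat \<Rightarrow> nat) \<Rightarrow> real" where
  "exp_dist n Q \<sigma> = (\<Sum>\<tau>\<in>perms n. Q \<tau> * kendall n \<tau> \<sigma>)"

text \<open>Kemeny median (unique minimizer for Q in T).\<close>
definition kemeny :: "nat \<Rightarrow> ((nat \<Rightarrow> nat) \<Rightarrow> real) \<Rightarrow> (nat \<Rightarrow> nat)" where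
  "kemeny n Q = (THE \<sigma>. \<sigma> \<in> perms n \<and> (\<forall>\<sigma>'\<in>perms n. exp_dist n Q \<sigma> \<le> exp_dist n Q \<sigma>'))"

text \<open>Conditional distribution P_C of Sigma given X in C, where P x is the
  conditional distribution of Sigma given X = x and X ~ mu.\<close>
definition cond_cell :: "'a measure \<Rightarrow> ('a \<Rightarrow> (nat \<Rightarrow> nat) \<Rightarrow> real) \<Rightarrow> 'a set
    \<Rightarrow> (nat \<Rightarrow> nat) \<Rightarrow> real" where
  "cond_cell \<mu> P C = (\<lambda>\<sigma>. (LINT x:C|\<mu>. P x \<sigma>) / measure \<mu> C)"

definition rules :: "nat \<Rightarrow> 'a measure \<Rightarrow> 'a set \<Rightarrow> ('a \<Rightarrow> (nat \<Rightarrow> nat)) set" where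
  "rules n \<mu> \<X> = {s. (\<forall>x\<in>\<X>. s x \<in> perms n) \<and> (\<forall>\<sigma>. {x\<in>\<X>. s x = \<sigma>} \<in> sets \<mu>)}"

definition risk :: "nat \<Rightarrow> 'a measure \<Rightarrow> 'a set \<Rightarrow> ('a \<Rightarrow> (nat \<Rightarrow> nat) \<Rightarrow> real)
    \<Rightarrow> ('a \<Rightarrow> (nat \<Rightarrow> nat)) \<Rightarrow> real" where
  "risk n \<mu> \<X> P s = (LINT x:\<X>|\<mu>. (\<Sum>\<sigma>\<in>perms n. P x \<sigma> * kendall n (s x) \<sigma>))"

definition opt_risk :: "nat \<Rightarrow> 'a measure \<Rightarrow> 'a set \<Rightarrow> ('a \<Rightarrow> (nat \<Rightarrow> nat) \<Rightarrow> real) \<Rightarrow> real" where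
  "opt_risk n \<mu> \<X> P = (INF s\<in>rules n \<mu> \<X>. risk n \<mu> \<X> P s)"

definition is_partition :: "'a measure \<Rightarrow> 'a set \<Rightarrow> 'a set set \<Rightarrow> bool" where
  "is_partition \<mu> \<X> \<P> \<longleftrightarrow> finite \<P> \<and> \<Union>\<P> = \<X>
     \<and> (\<forall>C\<in>\<P>. \<forall>C'\<in>\<P>. C \<noteq> C' \<longrightarrow> C \<inter> C' = {})
     \<and> (\<forall>C\<in>\<P>. C \<in> sets \<mu> \<and> measure \<mu> C > 0)"

definition piecewise_rules :: "nat \<Rightarrow> 'a measure \<Rightarrow> 'a set \<Rightarrow> 'a set set \<Rightarrow> ('a \<Rightarrow> (nat \<Rightarrow> nat)) set" where
  "piecewise_rules n \<mu> \<X> \<P> = {s \<in> rules n \<mu> \<X>. \<forall>C\<in>\<P>. \<forall>x\<in>C. \<forall>x'\<in>C. s x = s x'}"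

definition opt_piecewise :: "nat \<Rightarrow> 'a measure \<Rightarrow> 'a set \<Rightarrow> ('a \<Rightarrow> (nat \<Rightarrow> nat) \<Rightarrow> real)
    \<Rightarrow> 'a set set \<Rightarrow> ('a \<Rightarrow> (nat \<Rightarrow> nat)) set" where
  "opt_piecewise n \<mu> \<X> P \<P> = {s \<in> piecewise_rules n \<mu> \<X> \<P>.
      \<forall>s'\<in>piecewise_rules n \<mu> \<X> \<P>. risk n \<mu> \<X> P s \<le> risk n \<mu> \<X> P s'}"

definition diam_part :: "('a::real_normed_vector \<Rightarrow> real) \<Rightarrow> 'a set set \<Rightarrow> ereal" where
  "diam_part N \<P> = Max ((\<lambda>C. SUP x\<in>C. SUP x'\<in>C. ereal (N (x - x'))) ` \<P>)"

definition cell_of :: "'a set set \<Rightarrow> 'a \<Rightarrow> 'a set" where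
  "cell_of \<P> x = (THE C. C \<in> \<P> \<and> x \<in> C)"

definition s_star :: "nat \<Rightarrow> 'a measure \<Rightarrow> ('a \<Rightarrow> (nat \<Rightarrow> nat) \<Rightarrow> real) \<Rightarrow> 'a set set
    \<Rightarrow> 'a \<Rightarrow> (nat \<Rightarrow> nat)" where
  "s_star n \<mu> P \<P> x = kemeny n (cond_cell \<mu> P (cell_of \<P> x))"

definition margin :: "nat \<Rightarrow> 'a set \<Rightarrow> ('a \<Rightarrow> (nat \<Rightarrow> nat) \<Rightarrow> real) \<Rightarrow> real" where
  "margin n \<X> P = (INF x\<in>\<X>. Min {\<bar>pprob n (P x) i j - 1/2\<bar> | i j. 1 \<le> i \<and> i < j \<and> j \<le> n})"

definition is_norm :: "('a::real_vector \<Rightarrow> real) \<Rightarrow> bool" where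
  "is_norm N \<longleftrightarrow> (\<forall>x. N x = 0 \<longleftrightarrow> x = 0) \<and> (\<forall>c x. N (c *\<^sub>R x) = \<bar>c\<bar> * N x)
     \<and> (\<forall>x y. N (x + y) \<le> N x + N y)"

end

(*
  For a distribution in the class T, the Kemeny median is the Copeland ranking of its pairwise
  probabilities p_ij, and the expected Kendall distance of a ranking exceeds that of the median
  by the sum of |2 p_ij - 1| over the pairs on which the two disagree. On such a pair p_ij(x)
  and p_ij(y) lie on opposite sides of 1/2, so exchanging the medians of two points x, y of a
  cell costs at most 2 sum |p_ij(x) - p_ij(y)| <= 2 M |x - y|. Averaging this over pairs of
  points of the cell, weighted by which median each point has, yields a ranking that is
  constant on the cell and whose excess risk there is at most M delta_P times its mass.
  For (2), the medians of P_x and P_C disagree only on pairs where p_ij(x) and the cell average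
  p_ij(C) straddle 1/2; by the margin H each such pair contributes at least H to
  sum |p_ij(x) - p_ij(C)| <= M delta_P.
*)

theory Submission
  imports Defs
begin

section \<open>Kemeny medians through pairwise probabilities\<close>

lemma finite_perms: "finite (perms n)"
  unfolding perms_def using finite_permutations[of "{1..n}"] by simp

lemma perms_in_range: "\<sigma> \<in> perms n \<Longrightarrow> i \<in> {1..n} \<Longrightarrow> \<sigma> i \<in> {1..n}"
  unfolding perms_def using permutes_in_image[of \<sigma> "{1..n}" i] by blast

lemma perms_fixpoint: "\<sigma> \<in> perms n \<Longrightarrow> i \<notin> {1..n} \<Longrightarrow> \<sigma> i = i"
  unfolding perms_def using permutes_not_in[of \<sigma> "{1..n}" i] by blast

lemma perms_inj: "\<sigma> \<in> perms n \<Longrightarrow> \<sigma> i = \<sigma> j \<Longrightarrow> i = j"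
  unfolding perms_def using permutes_inj[of \<sigma> "{1..n}"] by (simp add: inj_eq)

lemma id_in_perms: "id \<in> perms n"
  unfolding perms_def by (simp add: permutes_id)

lemma card_perms_below:
  assumes s: "\<sigma> \<in> perms n" and i: "i \<in> {1..n}"
  shows "card {k\<in>{1..n}. \<sigma> k < \<sigma> i} = \<sigma> i - 1"
proof -
  have "bij_betw \<sigma> {1..n} {1..n}"
    using s permutes_imp_bij[of \<sigma> "{1..n}"] unfolding perms_def by blast
  then have inj: "inj_on \<sigma> {1..n}" and im: "\<sigma> ` {1..n} = {1..n}" unfolding bij_betw_def by auto
  have "\<sigma> ` {k\<in>{1..n}. \<sigma> k < \<sigma> i} = {m\<in>{1..n}. m < \<sigma> i}"
  proof
    show "{m\<in>{1..n}. m < \<sigma> i} \<subseteq> \<sigma> ` {k\<in>{1..n}. \<sigma> k < \<sigma> i}"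
    proof
      fix m assume m: "m \<in> {m\<in>{1..n}. m < \<sigma> i}"
      then obtain k where "k \<in> {1..n}" "m = \<sigma> k"
        using im by (metis (no_types, lifting) imageE mem_Collect_eq)
      then show "m \<in> \<sigma> ` {k\<in>{1..n}. \<sigma> k < \<sigma> i}" using m by blast
    qed
  qed (use perms_in_range[OF s] in blast)
  also have "\<dots> = {1..<\<sigma> i}" using perms_in_range[OF s i] by auto
  finally have "card (\<sigma> ` {k\<in>{1..n}. \<sigma> k < \<sigma> i}) = \<sigma> i - 1" by simp
  moreover have "inj_on \<sigma> {k\<in>{1..n}. \<sigma> k < \<sigma> i}" using inj by (rule inj_on_subset) blast
  ultimately show ?thesis by (simp add: card_image)
qed

lemma perms_eqI_order:
  assumes s: "\<sigma> \<in> perms n" and t: "\<tau> \<in> perms n"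
    and order: "\<And>i j. i \<in> {1..n} \<Longrightarrow> j \<in> {1..n} \<Longrightarrow> i < j \<Longrightarrow> \<sigma> i < \<sigma> j \<longleftrightarrow> \<tau> i < \<tau> j"
  shows "\<sigma> = \<tau>"
proof
  fix i
  show "\<sigma> i = \<tau> i"
  proof (cases "i \<in> {1..n}")
    case False
    then show ?thesis using perms_fixpoint[OF s] perms_fixpoint[OF t] by simp
  next
    case True
    have "\<sigma> k < \<sigma> i \<longleftrightarrow> \<tau> k < \<tau> i" if k: "k \<in> {1..n}" for k
    proof -
      consider "k < i" | "k = i" | "i < k" by linarith
      then show ?thesis
      proof cases
        case 3
        have "\<sigma> i \<noteq> \<sigma> k" "\<tau> i \<noteq> \<tau> k" using perms_inj[OF s] perms_inj[OF t] 3 by blast+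
        then show ?thesis using order[OF True k 3] by linarith
      qed (use order True k in auto)
    qed
    then have "{k\<in>{1..n}. \<sigma> k < \<sigma> i} = {k\<in>{1..n}. \<tau> k < \<tau> i}" by auto
    then have "\<sigma> i - 1 = \<tau> i - 1"
      using card_perms_below[OF s True] card_perms_below[OF t True] by simp
    moreover have "\<sigma> i \<ge> 1" "\<tau> i \<ge> 1"
      using perms_in_range[OF s True] perms_in_range[OF t True] by auto
    ultimately show ?thesis by simp
  qed
qed

lemma kendall_perms:
  assumes "\<sigma> \<in> perms n" "\<tau> \<in> perms n"
  shows "kendall n \<sigma> \<tau> =
    (\<Sum>i\<in>{1..n}. \<Sum>j\<in>{i<..n}. if (\<sigma> i < \<sigma> j) \<noteq> (\<tau> i < \<tau> j) then 1 else 0)"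
  unfolding kendall_def
proof (intro sum.cong refl)
  fix i j assume "i \<in> {1..n}" "j \<in> {i<..n}"
  then have "i \<noteq> j" by auto
  then have "\<sigma> i \<noteq> \<sigma> j" "\<tau> i \<noteq> \<tau> j" using perms_inj assms by blast+
  then show "(if (int (\<sigma> i) - int (\<sigma> j)) * (int (\<tau> i) - int (\<tau> j)) < 0 then 1 else 0) =
        (if (\<sigma> i < \<sigma> j) \<noteq> (\<tau> i < \<tau> j) then 1 else (0::real))"
    by (auto simp: mult_less_0_iff)
qed

lemma kendall_commute: "kendall n \<sigma> \<tau> = kendall n \<tau> \<sigma>"
  unfolding kendall_def by (simp add: mult.commute)

lemma kendall_nonneg: "0 \<le> kendall n \<sigma> \<tau>"
  unfolding kendall_def by (intro sum_nonneg) auto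

lemma sum_pairs_le:
  fixes f :: "nat \<Rightarrow> nat \<Rightarrow> real"
  assumes "\<And>i j. f i j \<le> 1"
  shows "(\<Sum>i\<in>{1..n}. \<Sum>j\<in>{i<..n}. f i j) \<le> real n * real n"
proof -
  have "(\<Sum>i\<in>{1..n}. \<Sum>j\<in>{i<..n}. f i j) \<le> (\<Sum>i\<in>{1..n}. \<Sum>j\<in>{i<..n}. 1)"
    using assms by (intro sum_mono) auto
  also have "\<dots> \<le> (\<Sum>i\<in>{1..n}. real n)" by (intro sum_mono) auto
  finally show ?thesis by simp
qed

lemma kendall_le: "kendall n \<sigma> \<tau> \<le> real n * real n"
  unfolding kendall_def by (rule sum_pairs_le) simp

lemma pprob_swap:
  assumes "is_dist n Q" "i \<in> {1..n}" "j \<in> {1..n}" "i \<noteq> j"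
  shows "pprob n Q j i = 1 - pprob n Q i j"
proof -
  have "\<sigma> i \<noteq> \<sigma> j" if "\<sigma> \<in> perms n" for \<sigma> using perms_inj[OF that] assms(4) by blast
  then have "perms n = {\<sigma>\<in>perms n. \<sigma> i < \<sigma> j} \<union> {\<sigma>\<in>perms n. \<sigma> j < \<sigma> i}"
    by (auto simp: nat_neq_iff)
  moreover have "{\<sigma>\<in>perms n. \<sigma> i < \<sigma> j} \<inter> {\<sigma>\<in>perms n. \<sigma> j < \<sigma> i} = {}" by auto
  ultimately have "sum Q (perms n) = pprob n Q i j + pprob n Q j i"
    unfolding pprob_def by (metis (no_types, lifting) finite_Un finite_perms sum.union_disjoint)
  then show ?thesis using assms(1) unfolding is_dist_def by simp
qed

lemma pprob_nonneg: "is_dist n Q \<Longrightarrow> 0 \<le> pprob n Q i j"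
  unfolding pprob_def is_dist_def by (intro sum_nonneg) auto

lemma pprob_le_one:
  assumes "is_dist n Q" shows "pprob n Q i j \<le> 1"
proof -
  have "pprob n Q i j \<le> sum Q (perms n)"
    using assms unfolding pprob_def is_dist_def by (intro sum_mono2 finite_perms) auto
  then show ?thesis using assms unfolding is_dist_def by simp
qed

text \<open>The expected Kendall distance is linear in the pairwise probabilities.\<close>

definition pairwise_loss :: "nat \<Rightarrow> (nat \<Rightarrow> nat \<Rightarrow> real) \<Rightarrow> (nat \<Rightarrow> nat) \<Rightarrow> real" where
  "pairwise_loss n p \<sigma> = (\<Sum>i\<in>{1..n}. \<Sum>j\<in>{i<..n}. if \<sigma> i < \<sigma> j then 1 - p i j else p i j)"

lemma pairwise_loss_nonneg: "(\<And>i j. 0 \<le> p i j \<and> p i j \<le> 1) \<Longrightarrow> 0 \<le> pairwise_loss n p \<sigma>"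
  unfolding pairwise_loss_def by (intro sum_nonneg) (auto simp: le_diff_eq)

lemma pairwise_loss_le: "(\<And>i j. 0 \<le> p i j \<and> p i j \<le> 1) \<Longrightarrow> pairwise_loss n p \<sigma> \<le> real n * real n"
  unfolding pairwise_loss_def by (rule sum_pairs_le) auto

lemma exp_dist_eq_pairwise_loss:
  assumes Q: "is_dist n Q" and s: "\<sigma> \<in> perms n"
  shows "exp_dist n Q \<sigma> = pairwise_loss n (pprob n Q) \<sigma>"
proof -
  let ?d = "\<lambda>\<tau> i j. if (\<tau> i < \<tau> j) \<noteq> (\<sigma> i < \<sigma> j) then 1 else 0 :: real"
  have "exp_dist n Q \<sigma> = (\<Sum>\<tau>\<in>perms n. \<Sum>i\<in>{1..n}. \<Sum>j\<in>{i<..n}. Q \<tau> * ?d \<tau> i j)"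
    unfolding exp_dist_def by (intro sum.cong refl) (simp add: kendall_perms s sum_distrib_left)
  also have "\<dots> = (\<Sum>i\<in>{1..n}. \<Sum>j\<in>{i<..n}. \<Sum>\<tau>\<in>perms n. Q \<tau> * ?d \<tau> i j)"
    by (subst sum.swap) (simp add: sum.swap[of _ "perms n"])
  also have "\<dots> = pairwise_loss n (pprob n Q) \<sigma>"
    unfolding pairwise_loss_def
  proof (intro sum.cong refl)
    fix i j assume ij: "i \<in> {1..n}" "j \<in> {i<..n}"
    then have ij': "j \<in> {1..n}" "i \<noteq> j" by auto
    show "(\<Sum>\<tau>\<in>perms n. Q \<tau> * ?d \<tau> i j) =
        (if \<sigma> i < \<sigma> j then 1 - pprob n Q i j else pprob n Q i j)"
    proof (cases "\<sigma> i < \<sigma> j")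
      case True
      have "(\<Sum>\<tau>\<in>perms n. Q \<tau> * ?d \<tau> i j) = (\<Sum>\<tau>\<in>perms n. if \<tau> j < \<tau> i then Q \<tau> else 0)"
        using True perms_inj ij' by (intro sum.cong refl) (auto simp: nat_neq_iff)
      also have "\<dots> = pprob n Q j i" unfolding pprob_def by (simp add: sum.inter_filter finite_perms)
      finally show ?thesis using True pprob_swap[OF Q ij(1) ij'] by simp
    next
      case False
      have "(\<Sum>\<tau>\<in>perms n. Q \<tau> * ?d \<tau> i j) = (\<Sum>\<tau>\<in>perms n. if \<tau> i < \<tau> j then Q \<tau> else 0)"
        using False by (intro sum.cong refl) auto
      also have "\<dots> = pprob n Q i j" unfolding pprob_def by (simp add: sum.inter_filter finite_perms)
      finally show ?thesis using False by simp
    qed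
  qed
  finally show ?thesis .
qed

definition pairwise_sst :: "nat \<Rightarrow> (nat \<Rightarrow> nat \<Rightarrow> real) \<Rightarrow> bool" where
  "pairwise_sst n p \<longleftrightarrow>
     (\<forall>i\<in>{1..n}. \<forall>j\<in>{1..n}. i \<noteq> j \<longrightarrow> p j i = 1 - p i j \<and> p i j \<noteq> 1/2)
     \<and> (\<forall>i\<in>{1..n}. p i i = 0)
     \<and> (\<forall>i\<in>{1..n}. \<forall>j\<in>{1..n}. \<forall>k\<in>{1..n}. p i j \<ge> 1/2 \<and> p j k \<ge> 1/2 \<longrightarrow> p i k \<ge> 1/2)"

lemma SST_pairwise_sst: "SST n Q \<Longrightarrow> pairwise_sst n (pprob n Q)"
  unfolding pairwise_sst_def
proof (intro conjI ballI impI)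
  fix i j assume S: "SST n Q" and ij: "i \<in> {1..n}" "j \<in> {1..n}" "i \<noteq> j"
  then have Q: "is_dist n Q" unfolding SST_def by simp
  show "pprob n Q j i = 1 - pprob n Q i j" using pprob_swap[OF Q ij] .
  show "pprob n Q i j \<noteq> 1/2"
  proof (cases "i < j")
    case True then show ?thesis using S ij unfolding SST_def by blast
  next
    case False
    then have "pprob n Q j i \<noteq> 1/2" using S ij unfolding SST_def by auto
    then show ?thesis using pprob_swap[OF Q ij] by simp
  qed
next
  fix i show "pprob n Q i i = 0" unfolding pprob_def by simp
next
  fix i j k assume "SST n Q" "i \<in> {1..n}" "j \<in> {1..n}" "k \<in> {1..n}"
    "1/2 \<le> pprob n Q i j \<and> 1/2 \<le> pprob n Q j k"
  then show "1/2 \<le> pprob n Q i k" unfolding SST_def by blast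
qed

lemma pairwise_sst_flip:
  assumes "pairwise_sst n p" "i \<in> {1..n}" "j \<in> {1..n}" "i \<noteq> j"
  shows "p j i > 1/2 \<longleftrightarrow> \<not> p i j > 1/2"
proof -
  have "p j i = 1 - p i j" "p i j \<noteq> 1/2" using assms unfolding pairwise_sst_def by blast+
  then show ?thesis by linarith
qed

text \<open>The Copeland ranking; under strict stochastic transitivity it is the Kemeny median.\<close>

definition beaters :: "nat \<Rightarrow> (nat \<Rightarrow> nat \<Rightarrow> real) \<Rightarrow> nat \<Rightarrow> nat set" where
  "beaters n p i = {k\<in>{1..n}. p k i > 1/2}"

definition majority_ranking :: "nat \<Rightarrow> (nat \<Rightarrow> nat \<Rightarrow> real) \<Rightarrow> nat \<Rightarrow> nat" where
  "majority_ranking n p i = (if i \<in> {1..n} then Suc (card (beaters n p i)) else i)"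

lemma beaters_psubset:
  assumes p: "pairwise_sst n p" and ij: "i \<in> {1..n}" "j \<in> {1..n}" "i \<noteq> j" and pij: "p i j > 1/2"
  shows "beaters n p i \<subset> beaters n p j"
proof -
  have "k \<in> beaters n p j" if k: "k \<in> beaters n p i" for k
  proof -
    have k1: "k \<in> {1..n}" "p k i > 1/2" using k unfolding beaters_def by auto
    have "k \<noteq> j" using k1 pij pairwise_sst_flip[OF p ij] by blast
    then have "p k j \<noteq> 1/2" using p k1 ij unfolding pairwise_sst_def by blast
    moreover have "p k j \<ge> 1/2"
    proof -
      have "\<forall>i\<in>{1..n}. \<forall>j\<in>{1..n}. \<forall>k\<in>{1..n}. p i j \<ge> 1/2 \<and> p j k \<ge> 1/2 \<longrightarrow> p i k \<ge> 1/2"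
        using p unfolding pairwise_sst_def by blast
      moreover have "p k i \<ge> 1/2" "p i j \<ge> 1/2" using k1 pij by auto
      ultimately show ?thesis using k1(1) ij(1,2) by blast
    qed
    ultimately show ?thesis using k1 unfolding beaters_def by auto
  qed
  moreover have "p i i = 0" using ij p unfolding pairwise_sst_def by blast
  then have "i \<in> beaters n p j" "i \<notin> beaters n p i" using ij pij unfolding beaters_def by auto
  ultimately show ?thesis by blast
qed

lemma majority_ranking_less_iff:
  assumes p: "pairwise_sst n p" and ij: "i \<in> {1..n}" "j \<in> {1..n}" "i \<noteq> j"
  shows "majority_ranking n p i < majority_ranking n p j \<longleftrightarrow> p i j > 1/2"
proof -
  have less: "card (beaters n p a) < card (beaters n p b)"
    if "a \<in> {1..n}" "b \<in> {1..n}" "a \<noteq> b" "p a b > 1/2" for a b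
    using psubset_card_mono[OF _ beaters_psubset[OF p that]] by (simp add: beaters_def)
  show ?thesis
  proof
    assume "majority_ranking n p i < majority_ranking n p j"
    then have "\<not> card (beaters n p j) < card (beaters n p i)"
      using ij unfolding majority_ranking_def by simp
    then show "p i j > 1/2" using less[OF ij(2,1)] pairwise_sst_flip[OF p ij] ij by auto
  qed (use less[OF ij] ij in \<open>simp add: majority_ranking_def\<close>)
qed


lemma majority_ranking_in_range:
  assumes p: "pairwise_sst n p" and i: "i \<in> {1..n}"
  shows "majority_ranking n p i \<in> {1..n}"
proof -
  have "p i i = 0" using i p unfolding pairwise_sst_def by blast
  then have "beaters n p i \<subseteq> {1..n} - {i}" using i unfolding beaters_def by auto
  then have "card (beaters n p i) \<le> card ({1..n} - {i})" by (intro card_mono) auto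
  then have "card (beaters n p i) \<le> n - 1" using i by simp
  then show ?thesis using i unfolding majority_ranking_def by auto
qed

lemma majority_ranking_in_perms:
  assumes p: "pairwise_sst n p"
  shows "majority_ranking n p \<in> perms n"
proof -
  have inj: "inj_on (majority_ranking n p) {1..n}"
  proof (rule inj_onI, rule ccontr)
    fix i j assume ij: "i \<in> {1..n}" "j \<in> {1..n}"
      "majority_ranking n p i = majority_ranking n p j" "i \<noteq> j"
    then have "\<not> p i j > 1/2" "\<not> p j i > 1/2"
      using majority_ranking_less_iff[OF p ij(1,2,4)] majority_ranking_less_iff[OF p ij(2,1)]
      by auto
    then show False using pairwise_sst_flip[OF p ij(1,2,4)] by blast
  qed
  moreover have "majority_ranking n p ` {1..n} \<subseteq> {1..n}"
    using majority_ranking_in_range[OF p] by auto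
  ultimately have "majority_ranking n p ` {1..n} = {1..n}"
    by (intro card_subset_eq) (auto simp: card_image)
  with inj have "bij_betw (majority_ranking n p) {1..n} {1..n}" unfolding bij_betw_def by simp
  moreover have "majority_ranking n p x = x" if "x \<notin> {1..n}" for x
    using that unfolding majority_ranking_def by auto
  ultimately have "majority_ranking n p permutes {1..n}" by (rule bij_imp_permutes)
  then show ?thesis unfolding perms_def by simp
qed

lemma pairwise_loss_excess:
  assumes p: "pairwise_sst n p"
  shows "pairwise_loss n p \<sigma> - pairwise_loss n p (majority_ranking n p) =
    (\<Sum>i\<in>{1..n}. \<Sum>j\<in>{i<..n}. if (\<sigma> i < \<sigma> j) \<noteq> (p i j > 1/2) then \<bar>2 * p i j - 1\<bar> else 0)"
  unfolding pairwise_loss_def sum_subtractf[symmetric]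
proof (intro sum.cong refl)
  fix i j assume ij: "i \<in> {1..n}" "j \<in> {i<..n}"
  then have "j \<in> {1..n}" "i \<noteq> j" by auto
  then have "majority_ranking n p i < majority_ranking n p j \<longleftrightarrow> p i j > 1/2" "p i j \<noteq> 1/2"
    using majority_ranking_less_iff[OF p ij(1)] p ij(1) unfolding pairwise_sst_def by blast+
  then show "(if \<sigma> i < \<sigma> j then 1 - p i j else p i j) -
      (if majority_ranking n p i < majority_ranking n p j then 1 - p i j else p i j) =
    (if (\<sigma> i < \<sigma> j) \<noteq> (p i j > 1/2) then \<bar>2 * p i j - 1\<bar> else 0)"
    by (auto simp: abs_if)
qed

lemma pairwise_loss_majority_le:
  assumes "pairwise_sst n p"
  shows "pairwise_loss n p (majority_ranking n p) \<le> pairwise_loss n p \<sigma>"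
proof -
  have "0 \<le> pairwise_loss n p \<sigma> - pairwise_loss n p (majority_ranking n p)"
    unfolding pairwise_loss_excess[OF assms] by (intro sum_nonneg) auto
  then show ?thesis by simp
qed

lemma kemeny_eq_majority_ranking:
  assumes S: "SST n Q"
  shows "kemeny n Q = majority_ranking n (pprob n Q)"
  unfolding kemeny_def
proof (rule the_equality)
  let ?p = "pprob n Q" and ?m = "majority_ranking n (pprob n Q)"
  have p: "pairwise_sst n ?p" using SST_pairwise_sst[OF S] .
  have Q: "is_dist n Q" using S unfolding SST_def by simp
  have m: "?m \<in> perms n" using majority_ranking_in_perms[OF p] .
  show "?m \<in> perms n \<and> (\<forall>\<sigma>'\<in>perms n. exp_dist n Q ?m \<le> exp_dist n Q \<sigma>')"
    using m pairwise_loss_majority_le[OF p] exp_dist_eq_pairwise_loss[OF Q] by simp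
  fix \<sigma> assume \<sigma>: "\<sigma> \<in> perms n \<and> (\<forall>\<sigma>'\<in>perms n. exp_dist n Q \<sigma> \<le> exp_dist n Q \<sigma>')"
  then have "pairwise_loss n ?p \<sigma> \<le> pairwise_loss n ?p ?m"
    using m exp_dist_eq_pairwise_loss[OF Q] by force
  then have "(\<Sum>i\<in>{1..n}. \<Sum>j\<in>{i<..n}.
      if (\<sigma> i < \<sigma> j) \<noteq> (?p i j > 1/2) then \<bar>2 * ?p i j - 1\<bar> else 0) = 0"
    using pairwise_loss_excess[OF p, of \<sigma>] pairwise_loss_majority_le[OF p, of \<sigma>] by linarith
  then have zero: "(if (\<sigma> i < \<sigma> j) \<noteq> (?p i j > 1/2) then \<bar>2 * ?p i j - 1\<bar> else 0) = 0"
    if "i \<in> {1..n}" "j \<in> {i<..n}" for i j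
    using that by (simp add: sum_nonneg_eq_0_iff sum_nonneg)
  show "\<sigma> = ?m"
  proof (rule perms_eqI_order)
    fix i j assume ij: "i \<in> {1..n}" "j \<in> {1..n}" "i < j"
    then have "?p i j \<noteq> 1/2" using p unfolding pairwise_sst_def by (metis less_irrefl)
    then have "(\<sigma> i < \<sigma> j) = (?p i j > 1/2)" using zero[of i j] ij by (auto split: if_splits)
    then show "(\<sigma> i < \<sigma> j) = (?m i < ?m j)" using majority_ranking_less_iff[OF p ij(1,2)] ij by simp
  qed (use \<sigma> m in auto)
qed

lemma kendall_majority_rankings:
  assumes "pairwise_sst n p" "pairwise_sst n p'"
  shows "kendall n (majority_ranking n p) (majority_ranking n p') =
    (\<Sum>i\<in>{1..n}. \<Sum>j\<in>{i<..n}. if (p i j > 1/2) \<noteq> (p' i j > 1/2) then 1 else 0)"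
  unfolding kendall_perms[OF majority_ranking_in_perms[OF assms(1)]
      majority_ranking_in_perms[OF assms(2)]]
  by (intro sum.cong refl)
     (simp add: majority_ranking_less_iff[OF assms(1)] majority_ranking_less_iff[OF assms(2)])

section \<open>Averaging inequalities\<close>

lemma abs_half_le_abs_diff: "(1/2 < a) \<noteq> (1/2 < b) \<Longrightarrow> \<bar>a - 1/2\<bar> \<le> \<bar>a - b\<bar>" for a b :: real
  by (cases "1/2 < a") auto

lemma abs_half_add_le_abs_diff:
  "(1/2 < a) \<noteq> (1/2 < b) \<Longrightarrow> \<bar>2 * a - 1\<bar> + \<bar>2 * b - 1\<bar> \<le> 2 * \<bar>a - b\<bar>" for a b :: real
  by (cases "1/2 < a") (auto simp: abs_if)

lemma double_sum_le_symmetrize: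
  fixes a b :: "'i \<Rightarrow> 'i \<Rightarrow> real"
  assumes "\<And>t t'. t \<in> T \<Longrightarrow> t' \<in> T \<Longrightarrow> a t t' + a t' t \<le> b t t' + b t' t"
  shows "(\<Sum>t\<in>T. \<Sum>t'\<in>T. a t t') \<le> (\<Sum>t\<in>T. \<Sum>t'\<in>T. b t t')"
proof -
  have double: "(\<Sum>t\<in>T. \<Sum>t'\<in>T. f t t' + f t' t) = 2 * (\<Sum>t\<in>T. \<Sum>t'\<in>T. f t t')"
    for f :: "'i \<Rightarrow> 'i \<Rightarrow> real"
    using sum.swap[of f T T] by (simp only: sum.distrib)
  have "(\<Sum>t\<in>T. \<Sum>t'\<in>T. a t t' + a t' t) \<le> (\<Sum>t\<in>T. \<Sum>t'\<in>T. b t t' + b t' t)"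
    by (intro sum_mono assms)
  then show ?thesis unfolding double by simp
qed

lemma weighted_average_le_imp_ex_le:
  fixes w F :: "'i \<Rightarrow> real"
  assumes "finite T" "\<And>t. t \<in> T \<Longrightarrow> 0 \<le> w t" "0 < sum w T"
    and "(\<Sum>t\<in>T. w t * F t) \<le> c * sum w T"
  shows "\<exists>t\<in>T. F t \<le> c"
proof (rule ccontr)
  assume "\<not> ?thesis"
  then have less: "c < F t" if "t \<in> T" for t using that by auto
  obtain t0 where t0: "t0 \<in> T" "0 < w t0"
    using assms(2,3) sum_nonpos[of T w] by (metis linorder_not_le)
  have "(\<Sum>t\<in>T. w t * c) < (\<Sum>t\<in>T. w t * F t)"
  proof (rule sum_strict_mono_ex1[OF assms(1)])
    show "\<forall>t\<in>T. w t * c \<le> w t * F t" using assms(2) less by (meson less_imp_le mult_left_mono)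
    show "\<exists>t\<in>T. w t * c < w t * F t" using t0 less[OF t0(1)] mult_strict_left_mono by blast
  qed
  then show False using assms(4) by (simp add: sum_distrib_left mult.commute)
qed

lemma set_integral_sum:
  fixes f :: "'i \<Rightarrow> 'a \<Rightarrow> real"
  assumes "\<And>i. i \<in> I \<Longrightarrow> set_integrable M A (f i)"
  shows "(LINT x:A|M. (\<Sum>i\<in>I. f i x)) = (\<Sum>i\<in>I. LINT x:A|M. f i x)"
  using assms unfolding set_lebesgue_integral_def set_integrable_def
  by (simp add: sum_distrib_left integral_sum)

lemma set_integrable_sum:
  fixes f :: "'i \<Rightarrow> 'a \<Rightarrow> real"
  assumes "\<And>i. i \<in> I \<Longrightarrow> set_integrable M A (f i)"
  shows "set_integrable M A (\<lambda>x. \<Sum>i\<in>I. f i x)"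
  using assms unfolding set_integrable_def by (simp add: sum_distrib_left)

context finite_measure
begin

lemma set_integrable_bounded:
  fixes f g :: "'a \<Rightarrow> real"
  assumes "g \<in> borel_measurable M" "A \<in> sets M"
    and "\<And>x. x \<in> A \<Longrightarrow> f x = g x" "\<And>x. x \<in> A \<Longrightarrow> \<bar>g x\<bar> \<le> K"
  shows "set_integrable M A f"
proof -
  have "set_integrable M A g" unfolding set_integrable_def
  proof (rule integrable_const_bound[where B="\<bar>K\<bar>"])
    show "AE x in M. norm (indicator A x *\<^sub>R g x) \<le> \<bar>K\<bar>"
      using assms(4) by (intro AE_I2) (force simp: indicator_def)
  qed (use assms(1,2) in measurable)
  then show ?thesis using set_integrable_cong[of M M A A f g] assms(3) by simp
qed

lemma set_integrable_const_real: "A \<in> sets M \<Longrightarrow> set_integrable M A (\<lambda>x. c :: real)"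
  by (rule set_integrable_bounded[where K = "\<bar>c\<bar>"]) auto

lemma set_integral_const_real: "A \<in> sets M \<Longrightarrow> (LINT x:A|M. (c :: real)) = measure M A * c"
  by (simp add: set_integral_const)

text \<open>Integrating the pointwise bound \<open>f x + g y \<le> c\<close> over \<open>A \<times> A'\<close>, one variable at a time.\<close>

lemma set_integral_pair_le:
  fixes f g :: "'a \<Rightarrow> real"
  assumes A: "A \<in> sets M" "A' \<in> sets M"
    and int: "set_integrable M A f" "set_integrable M A' g"
    and bound: "\<And>x y. x \<in> A \<Longrightarrow> y \<in> A' \<Longrightarrow> f x + g y \<le> c"
  shows "measure M A' * (LINT x:A|M. f x) + measure M A * (LINT y:A'|M. g y)
    \<le> c * measure M A * measure M A'"
proof -
  define I where "I = (LINT x:A|M. f x)"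
  have "measure M A * g y \<le> c * measure M A - I" if y: "y \<in> A'" for y
  proof -
    have "I \<le> (LINT x:A|M. c - g y)"
      unfolding I_def using A bound[OF _ y]
      by (intro set_integral_mono int set_integrable_const_real) force+
    then show ?thesis using A by (simp add: set_integral_const_real algebra_simps)
  qed
  then have "(LINT y:A'|M. measure M A * g y) \<le> (LINT y:A'|M. c * measure M A - I)"
    using A int
    by (intro set_integral_mono set_integrable_mult_right set_integrable_const_real) auto
  then show ?thesis using A unfolding I_def by (simp add: set_integral_const_real algebra_simps)
qed

lemma abs_diff_set_average_le:
  fixes g :: "'a \<Rightarrow> real"
  assumes A: "A \<in> sets M" "0 < measure M A" and g: "set_integrable M A g"
  shows "\<bar>a - (LINT y:A|M. g y) / measure M A\<bar> \<le> (LINT y:A|M. \<bar>a - g y\<bar>) / measure M A"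
proof -
  have int: "set_integrable M A (\<lambda>y. a - g y)"
    using A g by (intro set_integral_diff(1) set_integrable_const_real)
  have "a - (LINT y:A|M. g y) / measure M A = (LINT y:A|M. a - g y) / measure M A"
    using A g
    by (simp add: set_integral_diff(2)[OF set_integrable_const_real] set_integral_const_real
        field_simps)
  also have "\<bar>\<dots>\<bar> \<le> (LINT y:A|M. \<bar>a - g y\<bar>) / measure M A"
    using set_integral_norm_bound[OF int] A by (simp add: abs_divide divide_right_mono)
  finally show ?thesis .
qed

end

lemma cell_of_eqI:
  assumes "is_partition \<mu> X PP" "C \<in> PP" "x \<in> C"
  shows "cell_of PP x = C"
  unfolding cell_of_def
proof (rule the_equality)
  fix C' assume "C' \<in> PP \<and> x \<in> C'"
  then show "C' = C" using assms unfolding is_partition_def by blast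
qed (use assms in simp)

lemma cell_of_mem:
  assumes "is_partition \<mu> X PP" "x \<in> X"
  shows "cell_of PP x \<in> PP" "x \<in> cell_of PP x"
proof -
  obtain C where "C \<in> PP" "x \<in> C" using assms unfolding is_partition_def by blast
  then show "cell_of PP x \<in> PP" "x \<in> cell_of PP x" using cell_of_eqI[OF assms(1)] by simp_all
qed

lemma is_partition_disjoint: "is_partition \<mu> X PP \<Longrightarrow> disjoint_family_on (\<lambda>C. C) PP"
  unfolding is_partition_def disjoint_family_on_def by blast

lemma is_partition_subset: "is_partition \<mu> X PP \<Longrightarrow> C \<in> PP \<Longrightarrow> C \<subseteq> X"
  unfolding is_partition_def by blast

lemma set_integral_partition:
  fixes f :: "'a \<Rightarrow> real"
  assumes PP: "is_partition \<mu> X PP" and f: "\<And>C. C \<in> PP \<Longrightarrow> set_integrable \<mu> C f"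
  shows "(LINT x:X|\<mu>. f x) = (\<Sum>C\<in>PP. LINT x:C|\<mu>. f x)"
proof -
  have "X = (\<Union>C\<in>PP. C)" using PP unfolding is_partition_def by simp
  then show ?thesis
    using set_integral_finite_Union[of PP "\<lambda>C. C" \<mu> f] PP f is_partition_disjoint[OF PP]
    unfolding is_partition_def by simp
qed

lemma piecewise_rule_of_cells:
  assumes PP: "is_partition \<mu> X PP" and t: "\<And>C. C \<in> PP \<Longrightarrow> t C \<in> perms n"
  shows "(\<lambda>x. t (cell_of PP x)) \<in> piecewise_rules n \<mu> X PP"
proof -
  have "{x\<in>X. t (cell_of PP x) = \<sigma>} = \<Union>{C\<in>PP. t C = \<sigma>}" for \<sigma>
  proof
    show "{x\<in>X. t (cell_of PP x) = \<sigma>} \<subseteq> \<Union>{C\<in>PP. t C = \<sigma>}"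
      using cell_of_mem[OF PP] by blast
    show "\<Union>{C\<in>PP. t C = \<sigma>} \<subseteq> {x\<in>X. t (cell_of PP x) = \<sigma>}"
      using cell_of_eqI[OF PP] is_partition_subset[OF PP] by blast
  qed
  moreover have "\<Union>{C\<in>PP. t C = \<sigma>} \<in> sets \<mu>" for \<sigma>
    using PP unfolding is_partition_def by (intro sets.finite_Union) auto
  ultimately have "(\<lambda>x. t (cell_of PP x)) \<in> rules n \<mu> X"
    unfolding rules_def using t cell_of_mem[OF PP] by auto
  then show ?thesis
    unfolding piecewise_rules_def using cell_of_eqI[OF PP] by auto
qed

section \<open>Risk of ranking rules\<close>

lemma margin_le:
  assumes x: "x \<in> X" and ij: "1 \<le> i" "i < j" "j \<le> n"
  shows "margin n X P \<le> \<bar>pprob n (P x) i j - 1/2\<bar>"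
proof -
  define T where "T y = {\<bar>pprob n (P y) i j - 1/2\<bar> | i j. 1 \<le> i \<and> i < j \<and> j \<le> n}" for y
  have fin: "finite (T y)" for y
  proof (rule finite_subset)
    show "T y \<subseteq> (\<lambda>(i,j). \<bar>pprob n (P y) i j - 1/2\<bar>) ` ({1..n} \<times> {1..n})"
      unfolding T_def by force
  qed auto
  have mem: "\<bar>pprob n (P y) i j - 1/2\<bar> \<in> T y" for y unfolding T_def using ij by blast
  have "0 \<le> Min (T y)" for y
  proof -
    have "\<forall>a\<in>T y. 0 \<le> a" unfolding T_def by auto
    then show ?thesis using fin mem by (subst Min_ge_iff) auto
  qed
  then have "margin n X P \<le> Min (T x)" unfolding margin_def T_def[symmetric]
    by (intro cINF_lower[OF _ x] bdd_belowI[where m=0]) auto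
  also have "\<dots> \<le> \<bar>pprob n (P x) i j - 1/2\<bar>" using fin mem by (rule Min_le)
  finally show ?thesis .
qed

locale ranking_model =
  fixes n :: nat and \<mu> :: "'a measure" and X :: "'a set" and P :: "'a \<Rightarrow> (nat \<Rightarrow> nat) \<Rightarrow> real"
  assumes prob: "prob_space \<mu>"
    and X_sets: "X \<in> sets \<mu>"
    and X_measure: "emeasure \<mu> X = 1"
    and P_measurable: "\<forall>\<sigma>. set_borel_measurable \<mu> X (\<lambda>x. P x \<sigma>)"
    and P_SST: "\<forall>x\<in>X. SST n (P x)"
begin

sublocale prob_space \<mu> by (rule prob)

text \<open>The pairwise probabilities \<open>p\<^sub>i\<^sub>j(x)\<close>, with \<open>P\<close> extended by zero outside \<open>X\<close>
  so that they are measurable on the whole space.\<close>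

definition cond_pprob :: "'a \<Rightarrow> nat \<Rightarrow> nat \<Rightarrow> real" where
  "cond_pprob x = pprob n (\<lambda>\<sigma>. indicator X x * P x \<sigma>)"

definition loss :: "'a \<Rightarrow> (nat \<Rightarrow> nat) \<Rightarrow> real" where
  "loss x \<tau> = pairwise_loss n (cond_pprob x) \<tau>"

abbreviation median :: "'a \<Rightarrow> nat \<Rightarrow> nat" where
  "median x \<equiv> majority_ranking n (cond_pprob x)"

definition median_region :: "(nat \<Rightarrow> nat) \<Rightarrow> 'a set" where
  "median_region \<tau> = {x\<in>X. median x = \<tau>}"

text \<open>The optimal conditional loss \<open>loss x (median x)\<close>, written piecewise over the regions
  where the median is constant so that it is evidently measurable.\<close>

definition opt_loss :: "'a \<Rightarrow> real" where
  "opt_loss x = (\<Sum>\<tau>\<in>perms n. indicator (median_region \<tau>) x * loss x \<tau>)"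

definition pdist :: "'a \<Rightarrow> 'a \<Rightarrow> real" where
  "pdist x y = (\<Sum>i\<in>{1..n}. \<Sum>j\<in>{i<..n}. \<bar>cond_pprob x i j - cond_pprob y i j\<bar>)"

lemma P_ext_measurable[measurable]: "(\<lambda>x. indicator X x * P x \<sigma>) \<in> borel_measurable \<mu>"
  using P_measurable unfolding set_borel_measurable_def by simp

lemma cond_pprob_measurable[measurable]: "(\<lambda>x. cond_pprob x i j) \<in> borel_measurable \<mu>"
  unfolding cond_pprob_def pprob_def by measurable

lemma loss_measurable[measurable]: "(\<lambda>x. loss x \<tau>) \<in> borel_measurable \<mu>"
  unfolding loss_def pairwise_loss_def by measurable

lemma cond_pprob_eq: "x \<in> X \<Longrightarrow> cond_pprob x = pprob n (P x)"
  unfolding cond_pprob_def by simp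

lemma is_dist_P: "x \<in> X \<Longrightarrow> is_dist n (P x)"
  using P_SST unfolding SST_def by blast

lemma P_bounds: "x \<in> X \<Longrightarrow> \<sigma> \<in> perms n \<Longrightarrow> 0 \<le> P x \<sigma> \<and> P x \<sigma> \<le> 1"
proof -
  assume x: "x \<in> X" and \<sigma>: "\<sigma> \<in> perms n"
  have Px: "is_dist n (P x)" using is_dist_P[OF x] .
  then have "0 \<le> P x \<sigma>" using \<sigma> unfolding is_dist_def by blast
  moreover have "P x \<sigma> \<le> sum (P x) (perms n)"
    using Px \<sigma> unfolding is_dist_def by (intro member_le_sum finite_perms) auto
  ultimately show ?thesis using Px unfolding is_dist_def by simp
qed

lemma pairwise_sst_cond_pprob: "x \<in> X \<Longrightarrow> pairwise_sst n (cond_pprob x)"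
  using P_SST SST_pairwise_sst cond_pprob_eq by auto

lemma cond_pprob_bounds: "0 \<le> cond_pprob x i j \<and> cond_pprob x i j \<le> 1"
  by (cases "x \<in> X")
     (auto simp: cond_pprob_eq is_dist_P pprob_nonneg pprob_le_one, auto simp: cond_pprob_def pprob_def)

lemma abs_cond_pprob_diff_le: "\<bar>cond_pprob x i j - cond_pprob y i j\<bar> \<le> 1"
  using cond_pprob_bounds[of x i j] cond_pprob_bounds[of y i j] by (simp add: abs_le_iff)

lemma pdist_measurable[measurable]: "(\<lambda>y. pdist x y) \<in> borel_measurable \<mu>"
  unfolding pdist_def by measurable

lemma loss_nonneg: "0 \<le> loss x \<tau>"
  unfolding loss_def using cond_pprob_bounds by (rule pairwise_loss_nonneg)

lemma loss_le: "loss x \<tau> \<le> real n * real n"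
  unfolding loss_def using cond_pprob_bounds by (rule pairwise_loss_le)

lemma pdist_nonneg: "0 \<le> pdist x y"
  unfolding pdist_def by (intro sum_nonneg) auto

lemma pdist_le: "pdist x y \<le> real n * real n"
  unfolding pdist_def using abs_cond_pprob_diff_le by (rule sum_pairs_le)

lemma loss_eq_exp_dist: "x \<in> X \<Longrightarrow> \<tau> \<in> perms n \<Longrightarrow> loss x \<tau> = exp_dist n (P x) \<tau>"
  unfolding loss_def using exp_dist_eq_pairwise_loss is_dist_P cond_pprob_eq by simp

lemma median_region_sets: "\<tau> \<in> perms n \<Longrightarrow> median_region \<tau> \<in> sets \<mu>"
proof -
  assume \<tau>: "\<tau> \<in> perms n"
  have "median x = \<tau> \<longleftrightarrow>
      (\<forall>i\<in>{1..n}. \<forall>j\<in>{i<..n}. (\<tau> i < \<tau> j) = (1/2 < cond_pprob x i j))" if x: "x \<in> X" for x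
  proof
    assume "\<forall>i\<in>{1..n}. \<forall>j\<in>{i<..n}. (\<tau> i < \<tau> j) = (1/2 < cond_pprob x i j)"
    then show "median x = \<tau>"
      using majority_ranking_less_iff[OF pairwise_sst_cond_pprob[OF x]]
      by (intro perms_eqI_order[OF majority_ranking_in_perms[OF pairwise_sst_cond_pprob[OF x]] \<tau>])
         auto
  qed (use majority_ranking_less_iff[OF pairwise_sst_cond_pprob[OF x]] in fastforce)
  then have "median_region \<tau> =
      X \<inter> {x\<in>space \<mu>. \<forall>i\<in>{1..n}. \<forall>j\<in>{i<..n}. (\<tau> i < \<tau> j) = (1/2 < cond_pprob x i j)}"
    unfolding median_region_def using sets.sets_into_space[OF X_sets] by blast
  also have "\<dots> \<in> sets \<mu>" using X_sets by measurable
  finally show ?thesis .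
qed

lemma opt_loss_measurable[measurable]: "opt_loss \<in> borel_measurable \<mu>"
  unfolding opt_loss_def using median_region_sets by measurable

lemma opt_loss_eq: "x \<in> X \<Longrightarrow> opt_loss x = loss x (median x)"
  unfolding opt_loss_def median_region_def
  using majority_ranking_in_perms[OF pairwise_sst_cond_pprob]
  by (simp add: indicator_def if_distrib sum.delta finite_perms cong: if_cong)

lemma opt_loss_le: "x \<in> X \<Longrightarrow> opt_loss x \<le> loss x \<tau>"
  using opt_loss_eq pairwise_loss_majority_le[OF pairwise_sst_cond_pprob] unfolding loss_def by simp

lemma set_integrable_opt_loss: "A \<in> sets \<mu> \<Longrightarrow> A \<subseteq> X \<Longrightarrow> set_integrable \<mu> A opt_loss"
  by (rule set_integrable_bounded[where g = opt_loss and K = "real n * real n"])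
     (use opt_loss_eq loss_nonneg loss_le in \<open>auto simp: subset_iff\<close>)

lemma set_integrable_loss: "A \<in> sets \<mu> \<Longrightarrow> set_integrable \<mu> A (\<lambda>x. loss x \<tau>)"
  by (rule set_integrable_bounded[where g = "\<lambda>x. loss x \<tau>" and K = "real n * real n"])
     (use loss_nonneg loss_le in auto)

lemma set_integrable_loss_rule:
  assumes s: "s \<in> rules n \<mu> X" and A: "A \<in> sets \<mu>" "A \<subseteq> X"
  shows "set_integrable \<mu> A (\<lambda>x. loss x (s x))"
proof (rule set_integrable_bounded[where K = "real n * real n"])
  let ?g = "\<lambda>x. \<Sum>\<tau>\<in>perms n. indicator {x\<in>X. s x = \<tau>} x * loss x \<tau>"
  show "?g \<in> borel_measurable \<mu>" using s unfolding rules_def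
    by (intro borel_measurable_sum borel_measurable_times borel_measurable_indicator loss_measurable)
       auto
  fix x assume "x \<in> A"
  then have "x \<in> X" "s x \<in> perms n" using A s unfolding rules_def by auto
  then have "?g x = loss x (s x)"
    by (simp add: indicator_def if_distrib sum.delta finite_perms cong: if_cong)
  then show "loss x (s x) = ?g x" "\<bar>?g x\<bar> \<le> real n * real n" using loss_nonneg loss_le by auto
qed (use A in auto)

lemma risk_eq: "s \<in> rules n \<mu> X \<Longrightarrow> risk n \<mu> X P s = (LINT x:X|\<mu>. loss x (s x))"
  unfolding risk_def rules_def using X_sets loss_eq_exp_dist
  by (intro set_lebesgue_integral_cong) (auto simp: exp_dist_def kendall_commute)

lemma opt_risk_ge: "(LINT x:X|\<mu>. opt_loss x) \<le> opt_risk n \<mu> X P"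
  unfolding opt_risk_def
proof (rule cINF_greatest)
  have "{x\<in>X. id = \<sigma>} \<in> sets \<mu>" for \<sigma> :: "nat \<Rightarrow> nat"
    by (cases "id = \<sigma>") (auto simp: X_sets)
  then have "(\<lambda>x. id) \<in> rules n \<mu> X" using id_in_perms unfolding rules_def by auto
  then show "rules n \<mu> X \<noteq> {}" by blast
  fix s assume s: "s \<in> rules n \<mu> X"
  show "(LINT x:X|\<mu>. opt_loss x) \<le> risk n \<mu> X P s"
    unfolding risk_eq[OF s] using s opt_loss_le unfolding rules_def
    by (intro set_integral_mono set_integrable_opt_loss set_integrable_loss_rule[OF s] X_sets) auto
qed

lemma opt_risk_le: "s \<in> rules n \<mu> X \<Longrightarrow> opt_risk n \<mu> X P \<le> risk n \<mu> X P s"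
  unfolding opt_risk_def
proof (rule cINF_lower)
  have "0 \<le> risk n \<mu> X P s" if "s \<in> rules n \<mu> X" for s
    unfolding risk_eq[OF that] set_lebesgue_integral_def
    by (intro Bochner_Integration.integral_nonneg) (simp add: loss_nonneg)
  then show "bdd_below (risk n \<mu> X P ` rules n \<mu> X)" by (intro bdd_belowI[where m = 0]) auto
qed


lemma excess_loss_majority:
  assumes x: "x \<in> X" and y: "y \<in> X"
  shows "loss x (median y) - opt_loss x =
    (\<Sum>i\<in>{1..n}. \<Sum>j\<in>{i<..n}. if (1/2 < cond_pprob y i j) \<noteq> (1/2 < cond_pprob x i j)
      then \<bar>2 * cond_pprob x i j - 1\<bar> else 0)"
  unfolding opt_loss_eq[OF x] loss_def pairwise_loss_excess[OF pairwise_sst_cond_pprob[OF x]]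
  by (intro sum.cong refl) (auto simp: majority_ranking_less_iff[OF pairwise_sst_cond_pprob[OF y]])

lemma excess_loss_swap_le:
  assumes x: "x \<in> X" and y: "y \<in> X"
  shows "(loss x (median y) - opt_loss x) + (loss y (median x) - opt_loss y) \<le> 2 * pdist x y"
proof -
  have "(loss x (median y) - opt_loss x) + (loss y (median x) - opt_loss y)
      \<le> (\<Sum>i\<in>{1..n}. \<Sum>j\<in>{i<..n}. 2 * \<bar>cond_pprob x i j - cond_pprob y i j\<bar>)"
    unfolding excess_loss_majority[OF x y] excess_loss_majority[OF y x] sum.distrib[symmetric]
    by (intro sum_mono) (auto simp: abs_half_add_le_abs_diff)
  then show ?thesis unfolding pdist_def by (simp add: sum_distrib_left)
qed

lemma set_integrable_excess_loss:
  "A \<in> sets \<mu> \<Longrightarrow> A \<subseteq> X \<Longrightarrow> set_integrable \<mu> A (\<lambda>x. loss x \<tau> - opt_loss x)"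
  by (intro set_integral_diff(1) set_integrable_loss set_integrable_opt_loss)

lemma excess_loss_median_regions_le:
  assumes C: "C \<in> sets \<mu>" "C \<subseteq> X" and B: "\<And>x y. x \<in> C \<Longrightarrow> y \<in> C \<Longrightarrow> pdist x y \<le> B"
    and \<tau>: "\<tau> \<in> perms n" "\<tau>' \<in> perms n"
  defines "D \<equiv> \<lambda>\<tau>. C \<inter> median_region \<tau>"
  shows "measure \<mu> (D \<tau>') * (LINT x:D \<tau>|\<mu>. loss x \<tau>' - opt_loss x)
      + measure \<mu> (D \<tau>) * (LINT y:D \<tau>'|\<mu>. loss y \<tau> - opt_loss y)
    \<le> 2 * B * measure \<mu> (D \<tau>) * measure \<mu> (D \<tau>')"
proof (rule set_integral_pair_le)
  show D_sets: "D \<tau> \<in> sets \<mu>" "D \<tau>' \<in> sets \<mu>"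
    unfolding D_def using C(1) median_region_sets[OF \<tau>(1)] median_region_sets[OF \<tau>(2)] by blast+
  have "D \<tau> \<subseteq> X" "D \<tau>' \<subseteq> X" unfolding D_def using C(2) by blast+
  then show "set_integrable \<mu> (D \<tau>) (\<lambda>x. loss x \<tau>' - opt_loss x)"
    "set_integrable \<mu> (D \<tau>') (\<lambda>y. loss y \<tau> - opt_loss y)"
    using D_sets by (auto intro: set_integrable_excess_loss)
  fix x y assume "x \<in> D \<tau>" "y \<in> D \<tau>'"
  then have "x \<in> C" "y \<in> C" "x \<in> X" "y \<in> X" "median x = \<tau>" "median y = \<tau>'"
    unfolding D_def median_region_def by auto
  then show "loss x \<tau>' - opt_loss x + (loss y \<tau> - opt_loss y) \<le> 2 * B"
    using excess_loss_swap_le[of x y] B[of x y] by simp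
qed

text \<open>Weight each ranking \<open>\<tau>\<close> by the mass of the points of \<open>C\<close> whose median is \<open>\<tau>\<close>. Averaged
  over pairs of points, the previous bound shows that the weighted mean excess of the rankings
  over \<open>C\<close> is at most \<open>B \<mu>(C)\<close>, so some ranking achieves it.\<close>

lemma ex_cell_ranking:
  assumes C: "C \<in> sets \<mu>" "C \<subseteq> X" "0 < measure \<mu> C"
    and B: "\<And>x y. x \<in> C \<Longrightarrow> y \<in> C \<Longrightarrow> pdist x y \<le> B"
  shows "\<exists>\<tau>\<in>perms n. (LINT x:C|\<mu>. loss x \<tau>) \<le> (LINT x:C|\<mu>. opt_loss x) + B * measure \<mu> C"
proof -
  define D where "D \<tau> = C \<inter> median_region \<tau>" for \<tau>
  define w where "w \<tau> = measure \<mu> (D \<tau>)" for \<tau>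
  define e where "e \<tau> x = loss x \<tau> - opt_loss x" for \<tau> x
  have D_sets: "D \<tau> \<in> sets \<mu>" if "\<tau> \<in> perms n" for \<tau>
    unfolding D_def using C(1) median_region_sets[OF that] by blast
  have C_eq: "C = (\<Union>\<tau>\<in>perms n. D \<tau>)"
    using C(2) majority_ranking_in_perms[OF pairwise_sst_cond_pprob]
    unfolding D_def median_region_def by blast
  have disj: "disjoint_family_on D (perms n)"
    unfolding disjoint_family_on_def D_def median_region_def by blast
  have e_split: "(LINT x:C|\<mu>. e \<tau> x) = (\<Sum>\<tau>'\<in>perms n. LINT x:D \<tau>'|\<mu>. e \<tau> x)" for \<tau>
    unfolding e_def
    by (subst C_eq, rule set_integral_finite_Union[OF finite_perms disj])
       (use D_sets C(2) in \<open>auto simp: D_def intro: set_integrable_excess_loss\<close>)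
  have w_sum: "sum w (perms n) = measure \<mu> C"
    unfolding w_def by (subst C_eq, rule measure_finite_Union[OF finite_perms _ disj, symmetric])
      (use D_sets in auto)
  have "(\<Sum>\<tau>\<in>perms n. w \<tau> * (LINT x:C|\<mu>. e \<tau> x)) =
      (\<Sum>\<tau>\<in>perms n. \<Sum>\<tau>'\<in>perms n. w \<tau> * (LINT x:D \<tau>'|\<mu>. e \<tau> x))"
    by (simp add: e_split sum_distrib_left)
  also have "\<dots> \<le> (\<Sum>\<tau>\<in>perms n. \<Sum>\<tau>'\<in>perms n. B * w \<tau> * w \<tau>')"
  proof (rule double_sum_le_symmetrize)
    fix \<tau> \<tau>' assume "\<tau> \<in> perms n" "\<tau>' \<in> perms n"
    from excess_loss_median_regions_le[OF C(1,2) B this]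
    show "w \<tau> * (LINT x:D \<tau>'|\<mu>. e \<tau> x) + w \<tau>' * (LINT x:D \<tau>|\<mu>. e \<tau>' x)
        \<le> B * w \<tau> * w \<tau>' + B * w \<tau>' * w \<tau>"
      unfolding w_def e_def D_def by (simp add: algebra_simps)
  qed
  also have "\<dots> = B * (sum w (perms n) * sum w (perms n))"
    by (simp only: sum_product[of w "perms n" w "perms n"] sum_distrib_left[of B] mult.assoc)
  also have "\<dots> = B * measure \<mu> C * sum w (perms n)" using w_sum by simp
  finally have mean: "(\<Sum>\<tau>\<in>perms n. w \<tau> * (LINT x:C|\<mu>. e \<tau> x))
      \<le> B * measure \<mu> C * sum w (perms n)" .
  have "0 \<le> w \<tau>" for \<tau> unfolding w_def by simp
  moreover have "0 < sum w (perms n)" using w_sum C(3) by simp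
  ultimately obtain \<tau> where "\<tau> \<in> perms n" "(LINT x:C|\<mu>. e \<tau> x) \<le> B * measure \<mu> C"
    using weighted_average_le_imp_ex_le[OF finite_perms _ _ mean] by blast
  then show ?thesis
    using C unfolding e_def
    by (auto simp: set_integral_diff(2)[OF set_integrable_loss set_integrable_opt_loss]
        intro!: bexI[of _ \<tau>])
qed

lemma sum_measure_cells:
  assumes PP: "is_partition \<mu> X PP"
  shows "(\<Sum>C\<in>PP. measure \<mu> C) = 1"
proof -
  have "measure \<mu> (\<Union>C\<in>PP. C) = (\<Sum>C\<in>PP. measure \<mu> C)"
    using PP is_partition_disjoint[OF PP] unfolding is_partition_def
    by (intro measure_finite_Union) auto
  moreover have "(\<Union>C\<in>PP. C) = X" using PP unfolding is_partition_def by simp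
  ultimately show ?thesis using X_measure by (simp add: emeasure_eq_measure)
qed

lemma risk_gap_le:
  assumes PP: "is_partition \<mu> X PP"
    and B: "\<And>C x y. C \<in> PP \<Longrightarrow> x \<in> C \<Longrightarrow> y \<in> C \<Longrightarrow> pdist x y \<le> B"
    and s: "s \<in> opt_piecewise n \<mu> X P PP"
  shows "risk n \<mu> X P s - opt_risk n \<mu> X P \<le> B"
proof -
  have C: "C \<in> sets \<mu>" "C \<subseteq> X" "0 < measure \<mu> C" if "C \<in> PP" for C
    using PP that unfolding is_partition_def by auto
  have "\<forall>C\<in>PP. \<exists>\<tau>. \<tau> \<in> perms n \<and>
      (LINT x:C|\<mu>. loss x \<tau>) \<le> (LINT x:C|\<mu>. opt_loss x) + B * measure \<mu> C"
  proof
    fix C assume "C \<in> PP"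
    from ex_cell_ranking[OF C[OF this] B[OF this]]
    show "\<exists>\<tau>. \<tau> \<in> perms n \<and>
      (LINT x:C|\<mu>. loss x \<tau>) \<le> (LINT x:C|\<mu>. opt_loss x) + B * measure \<mu> C" by blast
  qed
  then obtain t where t: "\<forall>C\<in>PP. t C \<in> perms n \<and>
      (LINT x:C|\<mu>. loss x (t C)) \<le> (LINT x:C|\<mu>. opt_loss x) + B * measure \<mu> C"
    by (rule bchoice[THEN exE]) blast
  define s' where "s' x = t (cell_of PP x)" for x
  have s': "s' \<in> piecewise_rules n \<mu> X PP"
    unfolding s'_def using t by (intro piecewise_rule_of_cells[OF PP]) blast
  then have s'_rule: "s' \<in> rules n \<mu> X" unfolding piecewise_rules_def by blast
  have "risk n \<mu> X P s \<le> risk n \<mu> X P s'" using s s' unfolding opt_piecewise_def by blast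
  also have "\<dots> = (\<Sum>C\<in>PP. LINT x:C|\<mu>. loss x (s' x))"
    unfolding risk_eq[OF s'_rule]
    by (rule set_integral_partition[OF PP]) (intro set_integrable_loss_rule[OF s'_rule] C)
  also have "\<dots> = (\<Sum>C\<in>PP. LINT x:C|\<mu>. loss x (t C))"
    using C cell_of_eqI[OF PP] unfolding s'_def
    by (intro sum.cong refl set_lebesgue_integral_cong) auto
  also have "\<dots> \<le> (\<Sum>C\<in>PP. (LINT x:C|\<mu>. opt_loss x) + B * measure \<mu> C)"
    using t by (intro sum_mono) blast
  also have "\<dots> = (LINT x:X|\<mu>. opt_loss x) + B"
    using set_integral_partition[OF PP set_integrable_opt_loss[OF C(1,2)]] sum_measure_cells[OF PP]
    by (simp add: sum.distrib sum_distrib_left[symmetric])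
  finally show ?thesis using opt_risk_ge by simp
qed


lemma pprob_cond_cell:
  assumes C: "C \<in> sets \<mu>" "C \<subseteq> X"
  shows "pprob n (cond_cell \<mu> P C) i j = (LINT y:C|\<mu>. cond_pprob y i j) / measure \<mu> C"
proof -
  let ?S = "{\<sigma>\<in>perms n. \<sigma> i < \<sigma> j}"
  have int: "set_integrable \<mu> C (\<lambda>y. indicator X y * P y \<sigma>)" if "\<sigma> \<in> ?S" for \<sigma>
    by (rule set_integrable_bounded[where g = "\<lambda>y. indicator X y * P y \<sigma>" and K = 1,
        OF P_ext_measurable])
       (use C that P_bounds in \<open>auto simp: indicator_def subset_iff\<close>)
  have "pprob n (cond_cell \<mu> P C) i j = (\<Sum>\<sigma>\<in>?S. LINT y:C|\<mu>. P y \<sigma>) / measure \<mu> C"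
    unfolding pprob_def cond_cell_def by (simp add: sum_divide_distrib)
  also have "(\<Sum>\<sigma>\<in>?S. LINT y:C|\<mu>. P y \<sigma>) = (\<Sum>\<sigma>\<in>?S. LINT y:C|\<mu>. indicator X y * P y \<sigma>)"
    using C by (intro sum.cong refl set_lebesgue_integral_cong) (auto simp: indicator_def)
  also have "\<dots> = (LINT y:C|\<mu>. cond_pprob y i j)"
    unfolding cond_pprob_def pprob_def by (rule set_integral_sum[symmetric, OF int])
  finally show ?thesis .
qed

lemma pdist_cell_average_le:
  assumes C: "C \<in> sets \<mu>" "0 < measure \<mu> C" and B: "\<And>y. y \<in> C \<Longrightarrow> pdist x y \<le> B"
  shows "(\<Sum>i\<in>{1..n}. \<Sum>j\<in>{i<..n}.
    \<bar>cond_pprob x i j - (LINT y:C|\<mu>. cond_pprob y i j) / measure \<mu> C\<bar>) \<le> B"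
proof -
  have int: "set_integrable \<mu> C (\<lambda>y. cond_pprob y i j)" for i j
    by (rule set_integrable_bounded[where g = "\<lambda>y. cond_pprob y i j" and K = 1])
       (use C cond_pprob_bounds in auto)
  have int_abs: "set_integrable \<mu> C (\<lambda>y. \<bar>cond_pprob x i j - cond_pprob y i j\<bar>)" for i j
    by (rule set_integrable_bounded[where g = "\<lambda>y. \<bar>cond_pprob x i j - cond_pprob y i j\<bar>"
        and K = 1])
       (use C abs_cond_pprob_diff_le in auto)
  have "(\<Sum>i\<in>{1..n}. \<Sum>j\<in>{i<..n}.
        \<bar>cond_pprob x i j - (LINT y:C|\<mu>. cond_pprob y i j) / measure \<mu> C\<bar>)
      \<le> (\<Sum>i\<in>{1..n}. \<Sum>j\<in>{i<..n}.
        (LINT y:C|\<mu>. \<bar>cond_pprob x i j - cond_pprob y i j\<bar>) / measure \<mu> C)"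
    by (intro sum_mono abs_diff_set_average_le C int)
  also have "\<dots> = (LINT y:C|\<mu>. pdist x y) / measure \<mu> C"
    unfolding pdist_def sum_divide_distrib[symmetric]
    by (simp add: set_integral_sum set_integrable_sum int_abs)
  also have "\<dots> \<le> (LINT y:C|\<mu>. B) / measure \<mu> C"
  proof (intro divide_right_mono set_integral_mono)
    show "set_integrable \<mu> C (pdist x)"
      by (rule set_integrable_bounded[where g = "pdist x" and K = "real n * real n"])
         (use C pdist_nonneg pdist_le in auto)
  qed (use C B set_integrable_const_real in auto)
  also have "\<dots> = B" using C by (simp add: set_integral_const_real)
  finally show ?thesis .
qed

lemma kendall_median_cell_le:
  assumes PP: "is_partition \<mu> X PP" and H: "0 < H"
    and margin: "\<And>x i j. x \<in> X \<Longrightarrow> 1 \<le> i \<Longrightarrow> i < j \<Longrightarrow> j \<le> n \<Longrightarrow>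
      H \<le> \<bar>cond_pprob x i j - 1/2\<bar>"
    and sst: "\<And>C. C \<in> PP \<Longrightarrow> SST n (cond_cell \<mu> P C)"
    and B: "\<And>C x y. C \<in> PP \<Longrightarrow> x \<in> C \<Longrightarrow> y \<in> C \<Longrightarrow> pdist x y \<le> B"
    and x: "x \<in> X"
  shows "kendall n (kemeny n (P x)) (s_star n \<mu> P PP x) \<le> B / H"
proof -
  define C where "C = cell_of PP x"
  have C: "C \<in> PP" "x \<in> C" using cell_of_mem[OF PP x] unfolding C_def by auto
  then have C_props: "C \<in> sets \<mu>" "C \<subseteq> X" "0 < measure \<mu> C"
    using PP unfolding is_partition_def by auto
  define c where "c = pprob n (cond_cell \<mu> P C)"
  have c: "pairwise_sst n c" unfolding c_def using SST_pairwise_sst[OF sst[OF C(1)]] .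
  have "kendall n (kemeny n (P x)) (s_star n \<mu> P PP x) =
      kendall n (median x) (majority_ranking n c)"
    unfolding s_star_def C_def[symmetric] c_def
    using kemeny_eq_majority_ranking P_SST x sst[OF C(1)] cond_pprob_eq by simp
  also have "\<dots> = (\<Sum>i\<in>{1..n}. \<Sum>j\<in>{i<..n}. if (cond_pprob x i j > 1/2) \<noteq> (c i j > 1/2) then 1 else 0)"
    by (rule kendall_majority_rankings[OF pairwise_sst_cond_pprob[OF x] c])
  also have "\<dots> \<le> (\<Sum>i\<in>{1..n}. \<Sum>j\<in>{i<..n}. \<bar>cond_pprob x i j - c i j\<bar> / H)"
  proof (intro sum_mono)
    fix i j assume "i \<in> {1..n}" "j \<in> {i<..n}"
    then have "H \<le> \<bar>cond_pprob x i j - 1/2\<bar>" using margin x by auto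
    then show "(if (cond_pprob x i j > 1/2) \<noteq> (c i j > 1/2) then 1 else 0)
        \<le> \<bar>cond_pprob x i j - c i j\<bar> / H"
      using H abs_half_le_abs_diff[of "cond_pprob x i j" "c i j"] by auto
  qed
  also have "\<dots> = (\<Sum>i\<in>{1..n}. \<Sum>j\<in>{i<..n}. \<bar>cond_pprob x i j - c i j\<bar>) / H"
    by (simp add: sum_divide_distrib)
  also have "\<dots> \<le> B / H"
    unfolding c_def pprob_cond_cell[OF C_props(1,2)]
    using pdist_cell_average_le[OF C_props(1,3)] B[OF C(1) C(2)] H by (simp add: divide_right_mono)
  finally show ?thesis .
qed

lemma set_integral_le_SUP:
  fixes f :: "'a \<Rightarrow> real"
  assumes "\<And>x. 0 \<le> f x" "\<And>x. f x \<le> K"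
  shows "(LINT x:X|\<mu>. f x) \<le> (SUP x\<in>X. f x)"
proof -
  have bdd: "bdd_above (f ` X)" using assms(2) by (intro bdd_aboveI[where M = K]) auto
  show ?thesis
  proof (cases "set_integrable \<mu> X f")
    case True
    have "(LINT x:X|\<mu>. f x) \<le> (LINT x:X|\<mu>. (SUP x\<in>X. f x))"
      using True X_sets cSUP_upper[OF _ bdd]
      by (intro set_integral_mono set_integrable_const_real) auto
    also have "\<dots> = (SUP x\<in>X. f x)"
      using X_sets X_measure by (simp add: set_integral_const_real emeasure_eq_measure)
    finally show ?thesis .
  next
    case False
    obtain x0 where "x0 \<in> X" using X_measure by fastforce
    then have "0 \<le> (SUP x\<in>X. f x)" using cSUP_upper[OF _ bdd] assms(1)[of x0] by fastforce
    moreover have "(LINT x:X|\<mu>. f x) = 0" using False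
      unfolding set_lebesgue_integral_def set_integrable_def by (rule not_integrable_integral_eq)
    ultimately show ?thesis by simp
  qed
qed

end

section \<open>Lipschitz pairwise probabilities\<close>

lemma is_normD: "is_norm N \<Longrightarrow> N 0 = 0" "is_norm N \<Longrightarrow> 0 \<le> N x"
proof -
  assume N: "is_norm N"
  then show z: "N 0 = 0" unfolding is_norm_def by blast
  have "N (-x) = N x"
    using N unfolding is_norm_def by (metis abs_minus_cancel abs_one mult_1 scaleR_minus1_left)
  moreover have "N (x + -x) \<le> N x + N (-x)" using N unfolding is_norm_def by blast
  ultimately show "0 \<le> N x" using z by simp
qed

lemma diam_part_ge:
  assumes "finite PP" "C \<in> PP" "x \<in> C" "y \<in> C"
  shows "ereal (N (x - y)) \<le> diam_part N PP"
proof -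
  have "ereal (N (x - y)) \<le> (SUP x\<in>C. SUP x'\<in>C. ereal (N (x - x')))"
    using assms(3,4) by (meson SUP_upper order_trans)
  also have "\<dots> \<le> diam_part N PP" unfolding diam_part_def using assms(1,2) by (intro Max_ge) auto
  finally show ?thesis .
qed

lemma ex_cell_bound_le_diam:
  fixes N :: "'b::real_normed_vector \<Rightarrow> real" and d :: "'b \<Rightarrow> 'b \<Rightarrow> real"
  assumes PP: "is_partition \<mu> X PP" and X: "X \<noteq> {}" and N: "is_norm N"
    and d: "\<And>x y. 0 \<le> d x y" "\<And>x y. d x y \<le> K"
    and lip: "\<And>x y. x \<in> X \<Longrightarrow> y \<in> X \<Longrightarrow> d x y \<le> M * N (x - y)"
  shows "\<exists>B. (\<forall>C\<in>PP. \<forall>x\<in>C. \<forall>y\<in>C. d x y \<le> B) \<and> ereal B \<le> ereal M * diam_part N PP"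
proof -
  have fin: "finite PP" using PP unfolding is_partition_def by simp
  have CX: "C \<subseteq> X" if "C \<in> PP" for C using is_partition_subset[OF PP that] .
  obtain x0 where "x0 \<in> X" using X by blast
  then obtain C0 where C0: "C0 \<in> PP" "x0 \<in> C0" using PP unfolding is_partition_def by blast
  then have diam_nonneg: "0 \<le> diam_part N PP"
    using diam_part_ge[OF fin C0 C0(2), of N] is_normD(1)[OF N] by (simp add: zero_ereal_def)
  consider "M < 0" | "M = 0" | "0 < M" by linarith
  then show ?thesis
  proof cases
    case 1
    have N0: "N (x - y) = 0" if "x \<in> X" "y \<in> X" for x y
    proof -
      have "0 \<le> M * N (x - y)" using lip[OF that] d(1)[of x y] by linarith
      then have "N (x - y) \<le> 0" using 1 by (simp add: zero_le_mult_iff)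
      then show ?thesis using is_normD(2)[OF N, of "x - y"] by simp
    qed
    have "diam_part N PP \<le> 0"
      unfolding diam_part_def
    proof (rule Max.boundedI)
      fix a assume "a \<in> (\<lambda>C. SUP x\<in>C. SUP x'\<in>C. ereal (N (x - x'))) ` PP"
      then show "a \<le> 0" using N0 CX by (auto intro!: SUP_least simp: zero_ereal_def subset_iff)
    qed (use fin C0 in auto)
    then have "diam_part N PP = 0" using diam_nonneg by simp
    moreover have "d x y \<le> 0" if "C \<in> PP" "x \<in> C" "y \<in> C" for C x y
    proof -
      have xy: "x \<in> X" "y \<in> X" using CX[OF that(1)] that(2,3) by blast+
      show ?thesis using lip[OF xy] N0[OF xy] by simp
    qed
    ultimately show ?thesis by (intro exI[of _ 0]) (simp add: zero_ereal_def)
  next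
    case 2
    have "d x y \<le> 0" if "C \<in> PP" "x \<in> C" "y \<in> C" for C x y
    proof -
      have xy: "x \<in> X" "y \<in> X" using CX[OF that(1)] that(2,3) by blast+
      show ?thesis using lip[OF xy] 2 by simp
    qed
    then show ?thesis using 2 by (intro exI[of _ 0]) (simp add: zero_ereal_def[symmetric])
  next
    case 3
    show ?thesis
    proof (cases "diam_part N PP")
      case (real \<delta>)
      have "d x y \<le> M * \<delta>" if "C \<in> PP" "x \<in> C" "y \<in> C" for C x y
      proof -
        have "N (x - y) \<le> \<delta>" using diam_part_ge[OF fin that, of N] real by simp
        moreover have "x \<in> X" "y \<in> X" using CX[OF that(1)] that(2,3) by blast+
        ultimately show ?thesis using lip[of x y] 3 mult_left_mono[of "N (x - y)" \<delta> M] by linarith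
      qed
      then show ?thesis using real by (intro exI[of _ "M * \<delta>"]) auto
    next
      case PInf
      then show ?thesis using d(2) 3 by (intro exI[of _ K]) auto
    qed (use diam_nonneg in auto)
  qed
qed

locale lipschitz_ranking_model = ranking_model n \<mu> X P
  for n and \<mu> :: "'a::real_normed_vector measure" and X P +
  fixes N :: "'a \<Rightarrow> real" and M :: real
  assumes norm: "is_norm N"
    and lipschitz: "\<forall>x\<in>X. \<forall>x'\<in>X.
      (\<Sum>i\<in>{1..n}. \<Sum>j\<in>{i<..n}. \<bar>pprob n (P x) i j - pprob n (P x') i j\<bar>) \<le> M * N (x - x')"
begin

lemma ex_pdist_bound_le_diam:
  assumes PP: "is_partition \<mu> X PP"
  shows "\<exists>B. (\<forall>C\<in>PP. \<forall>x\<in>C. \<forall>y\<in>C. pdist x y \<le> B) \<and> ereal B \<le> ereal M * diam_part N PP"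
proof (rule ex_cell_bound_le_diam[OF PP _ norm pdist_nonneg pdist_le])
  show "X \<noteq> {}" using X_measure by auto
  show "pdist x y \<le> M * N (x - y)" if "x \<in> X" "y \<in> X" for x y
    using lipschitz that unfolding pdist_def by (simp add: cond_pprob_eq)
qed

lemma risk_gap_le_diam:
  assumes PP: "is_partition \<mu> X PP" and s: "s \<in> opt_piecewise n \<mu> X P PP"
  shows "ereal (risk n \<mu> X P s - opt_risk n \<mu> X P) \<le> ereal M * diam_part N PP"
proof -
  obtain B where B: "\<forall>C\<in>PP. \<forall>x\<in>C. \<forall>y\<in>C. pdist x y \<le> B" "ereal B \<le> ereal M * diam_part N PP"
    using ex_pdist_bound_le_diam[OF PP] by blast
  have "risk n \<mu> X P s - opt_risk n \<mu> X P \<le> B" using risk_gap_le[OF PP _ s] B(1) by blast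
  then have "ereal (risk n \<mu> X P s - opt_risk n \<mu> X P) \<le> ereal B" by simp
  then show ?thesis using B(2) by (rule order_trans)
qed

lemma risk_tendsto_opt_risk:
  assumes PP: "\<And>m. is_partition \<mu> X (Ps m)" and diam: "(\<lambda>m. diam_part N (Ps m)) \<longlonglongrightarrow> 0"
    and s: "\<And>m. ss m \<in> opt_piecewise n \<mu> X P (Ps m)"
  shows "(\<lambda>m. risk n \<mu> X P (ss m)) \<longlonglongrightarrow> opt_risk n \<mu> X P"
proof -
  define g where "g m = ereal (risk n \<mu> X P (ss m) - opt_risk n \<mu> X P)" for m
  have "ss m \<in> rules n \<mu> X" for m using s unfolding opt_piecewise_def piecewise_rules_def by blast
  then have lower: "0 \<le> g m" for m unfolding g_def using opt_risk_le by simp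
  have upper: "g m \<le> ereal M * diam_part N (Ps m)" for m
    unfolding g_def using risk_gap_le_diam[OF PP s] .
  have "(\<lambda>m. ereal M * diam_part N (Ps m)) \<longlonglongrightarrow> ereal M * 0"
    using diam by (rule tendsto_cmult_ereal[rotated]) simp
  then have lim: "(\<lambda>m. ereal M * diam_part N (Ps m)) \<longlonglongrightarrow> 0" by simp
  have "g \<longlonglongrightarrow> 0"
    by (rule tendsto_sandwich[where f = "\<lambda>m. 0" and h = "\<lambda>m. ereal M * diam_part N (Ps m)"])
       (use lower upper lim in auto)
  then have "(\<lambda>m. risk n \<mu> X P (ss m) - opt_risk n \<mu> X P) \<longlonglongrightarrow> 0"
    unfolding g_def zero_ereal_def lim_ereal .
  then show ?thesis by (simp add: LIM_zero_cancel)
qed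

lemma kendall_median_le_diam:
  assumes PP: "is_partition \<mu> X PP" and H: "0 < margin n X P"
    and sst: "\<forall>C\<in>PP. SST n (cond_cell \<mu> P C)"
  shows "ereal (SUP x\<in>X. kendall n (kemeny n (P x)) (s_star n \<mu> P PP x))
    \<le> ereal (M / margin n X P) * diam_part N PP"
proof -
  obtain B where B: "\<forall>C\<in>PP. \<forall>x\<in>C. \<forall>y\<in>C. pdist x y \<le> B" "ereal B \<le> ereal M * diam_part N PP"
    using ex_pdist_bound_le_diam[OF PP] by blast
  have "margin n X P \<le> \<bar>cond_pprob x i j - 1/2\<bar>" if "x \<in> X" "1 \<le> i" "i < j" "j \<le> n" for x i j
    using margin_le[OF that] cond_pprob_eq[OF that(1)] by simp
  then have "kendall n (kemeny n (P x)) (s_star n \<mu> P PP x) \<le> B / margin n X P" if "x \<in> X" for x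
    using kendall_median_cell_le[OF PP H _ _ _ that] sst B(1) by blast
  moreover obtain x0 where "x0 \<in> X" using X_measure by fastforce
  ultimately have "(SUP x\<in>X. kendall n (kemeny n (P x)) (s_star n \<mu> P PP x)) \<le> B / margin n X P"
    by (intro cSUP_least) auto
  then have "ereal (SUP x\<in>X. kendall n (kemeny n (P x)) (s_star n \<mu> P PP x))
      \<le> ereal (1 / margin n X P) * ereal B" by simp
  also have "\<dots> \<le> ereal (1 / margin n X P) * (ereal M * diam_part N PP)"
    using B(2) H by (intro ereal_mult_left_mono) auto
  also have "\<dots> = ereal (M / margin n X P) * diam_part N PP"
    by (simp add: mult.assoc[symmetric])
  finally show ?thesis .
qed

end

theorem theorem9:
  fixes n :: nat
    and N :: "'a::euclidean_space \<Rightarrow> real"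
    and \<mu> :: "'a measure"
    and \<X> :: "'a set"
    and P :: "'a \<Rightarrow> (nat \<Rightarrow> nat) \<Rightarrow> real"
    and M :: real
    and \<P> :: "'a set set"
  assumes "is_norm N"
    and "prob_space \<mu>"
    and "sets \<mu> = sets borel"
    and "\<X> \<in> sets \<mu>"
    and "emeasure \<mu> \<X> = 1"
    and "\<forall>\<sigma>. set_borel_measurable \<mu> \<X> (\<lambda>x. P x \<sigma>)"
    and "\<forall>x\<in>\<X>. SST n (P x)"
    and "\<forall>x\<in>\<X>. \<forall>x'\<in>\<X>.
           (\<Sum>i\<in>{1..n}. \<Sum>j\<in>{i<..n}. \<bar>pprob n (P x) i j - pprob n (P x') i j\<bar>) \<le> M * N (x - x')"
    and "is_partition \<mu> \<X> \<P>"
  shows "(\<forall>s\<in>opt_piecewise n \<mu> \<X> P \<P>.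
            ereal (risk n \<mu> \<X> P s - opt_risk n \<mu> \<X> P) \<le> ereal M * diam_part N \<P>)
       \<and> (\<forall>(Ps :: nat \<Rightarrow> 'a set set) (ss :: nat \<Rightarrow> 'a \<Rightarrow> (nat \<Rightarrow> nat)).
            (\<forall>m. is_partition \<mu> \<X> (Ps m)) \<and> (\<lambda>m. diam_part N (Ps m)) \<longlonglongrightarrow> 0
            \<and> (\<forall>m. ss m \<in> opt_piecewise n \<mu> \<X> P (Ps m))
            \<longrightarrow> (\<lambda>m. risk n \<mu> \<X> P (ss m)) \<longlonglongrightarrow> opt_risk n \<mu> \<X> P)
       \<and> (margin n \<X> P > 0 \<and> (\<forall>C\<in>\<P>. SST n (cond_cell \<mu> P C))
            \<longrightarrow> ereal (LINT x:\<X>|\<mu>. kendall n (kemeny n (P x)) (s_star n \<mu> P \<P> x))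
                  \<le> ereal (SUP x\<in>\<X>. kendall n (kemeny n (P x)) (s_star n \<mu> P \<P> x))
              \<and> ereal (SUP x\<in>\<X>. kendall n (kemeny n (P x)) (s_star n \<mu> P \<P> x))
                  \<le> ereal (M / margin n \<X> P) * diam_part N \<P>)"
proof -
  interpret lipschitz_ranking_model n \<mu> \<X> P N M
    using assms(1,2,4-8)
    by (simp add: lipschitz_ranking_model_def ranking_model_def lipschitz_ranking_model_axioms_def)
  have integral_le_SUP: "ereal (LINT x:\<X>|\<mu>. kendall n (kemeny n (P x)) (s_star n \<mu> P \<P> x))
      \<le> ereal (SUP x\<in>\<X>. kendall n (kemeny n (P x)) (s_star n \<mu> P \<P> x))"
    using set_integral_le_SUP[OF kendall_nonneg kendall_le] by simp
  show ?thesis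
    using risk_gap_le_diam[OF assms(9)] risk_tendsto_opt_risk integral_le_SUP
      kendall_median_le_diam[OF assms(9)] by blast
qed

end
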